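(* Let $(l_i)$ be pairwise distinct labels indexed by a set containing $j_0$ and the finite set $J$, and let $\sigma,\tau_j\in\mathbb{T}$. Then (1) if $j_0\in J$, $\langle l_{j_0}:\sigma\rangle+\langle l_j:\tau_j\mid j\in J\rangle=\langle l_j:\tau_j\mid j\in J\rangle$; (2) if $j_0\notin J$, $\langle l_{j_0}:\sigma\rangle+\langle l_j:\tau_j\mid j\in J\rangle=\langle l_{j_0}:\sigma\rangle\cap\langle l_j:\tau_j\mid j\in J\rangle$.
   Context: $\mathbb{T}\ni\sigma ::= a\mid\omega\mid\sigma_1\to\sigma_2\mid\sigma_1\cap\sigma_2\mid\rho$ and record types $\mathbb{T}_R\ni\rho ::= \langle\rangle\mid\langle l:\sigma\rangle\mid\rho_1+\rho_2\mid\rho_1\cap\rho_2$. Subtyping $\le$ is the least preorder with: $\sigma\le\omega$; $\omega\le\omega\to\omega$; $\sigma\cap\tau\le\sigma$; $\sigma\cap\tau\le\tau$; $\sigma\le\tau_1,\sigma\le\tau_2\Rightarrow\sigma\le\tau_1\cap\tau_2$; $(\sigma\to\tau_1)\cap(\sigma\to\tau_2)\le\sigma\to\tau_1\cap\tau_2$; $\sigma_2\le\sigma_1,\tau_1\le\tau_2\Rightarrow\sigma_1\to\tau_1\le\sigma_2\to\tau_2$; $\langle l:\sigma\rangle\le\langle\rangle$; $\langle l:\sigma\rangle\cap\langle l:\tau\rangle\le\langle l:\sigma\cap\tau\rangle$; $\sigma\le\tau\Rightarrow\langle l:\sigma\rangle\le\langle l:\tau\rangle$; $\rho+\langle\rangle=\langle\rangle+\rho=\rho$;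 $(\rho_1+\rho_2)+\rho_3=\rho_1+(\rho_2+\rho_3)$; $(\rho_1\cap\rho_2)+\rho_3=(\rho_1+\rho_3)\cap(\rho_2+\rho_3)$; $\langle l:\sigma\rangle+(\langle l:\tau\rangle\cap\rho)=\langle l:\tau\rangle\cap\rho$; $\langle l:\sigma\rangle+(\langle l':\tau\rangle\cap\rho)=\langle l':\tau\rangle\cap(\langle l:\sigma\rangle+\rho)$ if $l\neq l'$; $\rho_1\le\rho_2\Rightarrow\rho_1+\rho\le\rho_2+\rho$; $\rho_1=\rho_2\Rightarrow\rho+\rho_1=\rho+\rho_2$. $=$ means $\le$ in both directions. $\langle l_i:\sigma_i\mid i\in I\rangle$ stands for $\bigcap_{i\in I}\langle l_i:\sigma_i\rangle$ if $I\neq\emptyset$ and $\langle\rangle$ if $I=\emptyset$. *)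

theory Defs
  imports Main
begin

text \<open>Types sigma (with atoms of type a and labels of type l); record types are the
  subset singled out by is_rec. The intersection constructor is shared between
  ordinary types and record types.\<close>

datatype ('a, 'l) ity =
    Atom 'a
  | Omega
  | Arr "('a, 'l) ity" "('a, 'l) ity"
  | Inter "('a, 'l) ity" "('a, 'l) ity"
  | REmpty
  | RField 'l "('a, 'l) ity"
  | RPlus "('a, 'l) ity" "('a, 'l) ity"

fun wf_typ :: "('a, 'l) ity \<Rightarrow> bool" and is_rec :: "('a, 'l) ity \<Rightarrow> bool" where
  "wf_typ (Atom a) = True"
| "wf_typ Omega = True"
| "wf_typ (Arr s t) = (wf_typ s \<and> wf_typ t)"
| "wf_typ (Inter s t) = ((wf_typ s \<and> wf_typ t) \<or> (is_rec s \<and> is_rec t))"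
| "wf_typ REmpty = True"
| "wf_typ (RField l s) = wf_typ s"
| "wf_typ (RPlus r1 r2) = (is_rec r1 \<and> is_rec r2)"
| "is_rec (Atom a) = False"
| "is_rec Omega = False"
| "is_rec (Arr s t) = False"
| "is_rec (Inter r1 r2) = (is_rec r1 \<and> is_rec r2)"
| "is_rec REmpty = True"
| "is_rec (RField l s) = wf_typ s"
| "is_rec (RPlus r1 r2) = (is_rec r1 \<and> is_rec r2)"

inductive sub :: "('a, 'l) ity \<Rightarrow> ('a, 'l) ity \<Rightarrow> bool" where
  refl: "wf_typ s \<Longrightarrow> sub s s"
| trans: "sub s t \<Longrightarrow> sub t u \<Longrightarrow> sub s u"
| omega_top: "wf_typ s \<Longrightarrow> sub s Omega"
| omega_arr: "sub Omega (Arr Omega Omega)"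
| inter_l: "wf_typ (Inter s t) \<Longrightarrow> sub (Inter s t) s"
| inter_r: "wf_typ (Inter s t) \<Longrightarrow> sub (Inter s t) t"
| inter_glb: "sub s t1 \<Longrightarrow> sub s t2 \<Longrightarrow> sub s (Inter t1 t2)"
| arr_inter: "wf_typ s \<Longrightarrow> wf_typ t1 \<Longrightarrow> wf_typ t2 \<Longrightarrow>
     sub (Inter (Arr s t1) (Arr s t2)) (Arr s (Inter t1 t2))"
| arr_mono: "sub s2 s1 \<Longrightarrow> sub t1 t2 \<Longrightarrow> sub (Arr s1 t1) (Arr s2 t2)"
| field_empty: "wf_typ s \<Longrightarrow> sub (RField l s) REmpty"
| field_inter: "wf_typ s \<Longrightarrow> wf_typ t \<Longrightarrow>
     sub (Inter (RField l s) (RField l t)) (RField l (Inter s t))"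
| field_mono: "sub s t \<Longrightarrow> sub (RField l s) (RField l t)"
| plus_empty_r1: "is_rec r \<Longrightarrow> sub (RPlus r REmpty) r"
| plus_empty_r2: "is_rec r \<Longrightarrow> sub r (RPlus r REmpty)"
| plus_empty_l1: "is_rec r \<Longrightarrow> sub (RPlus REmpty r) r"
| plus_empty_l2: "is_rec r \<Longrightarrow> sub r (RPlus REmpty r)"
| plus_assoc1: "is_rec r1 \<Longrightarrow> is_rec r2 \<Longrightarrow> is_rec r3 \<Longrightarrow>
     sub (RPlus (RPlus r1 r2) r3) (RPlus r1 (RPlus r2 r3))"
| plus_assoc2: "is_rec r1 \<Longrightarrow> is_rec r2 \<Longrightarrow> is_rec r3 \<Longrightarrow>
     sub (RPlus r1 (RPlus r2 r3)) (RPlus (RPlus r1 r2) r3)"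
| plus_distr1: "is_rec r1 \<Longrightarrow> is_rec r2 \<Longrightarrow> is_rec r3 \<Longrightarrow>
     sub (RPlus (Inter r1 r2) r3) (Inter (RPlus r1 r3) (RPlus r2 r3))"
| plus_distr2: "is_rec r1 \<Longrightarrow> is_rec r2 \<Longrightarrow> is_rec r3 \<Longrightarrow>
     sub (Inter (RPlus r1 r3) (RPlus r2 r3)) (RPlus (Inter r1 r2) r3)"
| plus_same1: "wf_typ s \<Longrightarrow> wf_typ t \<Longrightarrow> is_rec r \<Longrightarrow>
     sub (RPlus (RField l s) (Inter (RField l t) r)) (Inter (RField l t) r)"
| plus_same2: "wf_typ s \<Longrightarrow> wf_typ t \<Longrightarrow> is_rec r \<Longrightarrow>
     sub (Inter (RField l t) r) (RPlus (RField l s) (Inter (RField l t) r))"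
| plus_diff1: "l \<noteq> l' \<Longrightarrow> wf_typ s \<Longrightarrow> wf_typ t \<Longrightarrow> is_rec r \<Longrightarrow>
     sub (RPlus (RField l s) (Inter (RField l' t) r)) (Inter (RField l' t) (RPlus (RField l s) r))"
| plus_diff2: "l \<noteq> l' \<Longrightarrow> wf_typ s \<Longrightarrow> wf_typ t \<Longrightarrow> is_rec r \<Longrightarrow>
     sub (Inter (RField l' t) (RPlus (RField l s) r)) (RPlus (RField l s) (Inter (RField l' t) r))"
| plus_mono_l: "is_rec r1 \<Longrightarrow> is_rec r2 \<Longrightarrow> is_rec r \<Longrightarrow> sub r1 r2 \<Longrightarrow>
     sub (RPlus r1 r) (RPlus r2 r)"
| plus_cong_r1: "is_rec r1 \<Longrightarrow> is_rec r2 \<Longrightarrow> is_rec r \<Longrightarrow> sub r1 r2 \<Longrightarrow> sub r2 r1 \<Longrightarrow>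
     sub (RPlus r r1) (RPlus r r2)"
| plus_cong_r2: "is_rec r1 \<Longrightarrow> is_rec r2 \<Longrightarrow> is_rec r \<Longrightarrow> sub r1 r2 \<Longrightarrow> sub r2 r1 \<Longrightarrow>
     sub (RPlus r r2) (RPlus r r1)"

definition teq :: "('a, 'l) ity \<Rightarrow> ('a, 'l) ity \<Rightarrow> bool" where
  "teq s t \<longleftrightarrow> sub s t \<and> sub t s"

fun rec_list :: "('l \<times> ('a, 'l) ity) list \<Rightarrow> ('a, 'l) ity" where
  "rec_list [] = REmpty"
| "rec_list [(l, s)] = RField l s"
| "rec_list ((l, s) # xs) = Inter (RField l s) (rec_list xs)"

definition rec_idx :: "('i::linorder \<Rightarrow> 'l) \<Rightarrow> ('i \<Rightarrow> ('a, 'l) ity) \<Rightarrow> 'i set \<Rightarrow> ('a, 'l) ity" where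
  "rec_idx l tau J = rec_list (map (\<lambda>j. (l j, tau j)) (sorted_list_of_set J))"

end

theory Submission
  imports Defs
begin

text \<open>A field
  with the label of the added field absorbs it (rule plus_same); a field with a different label
  lets it pass inwards (rule plus_diff). If the label never occurs, the added field reaches the
  empty record and ends up as one more conjunct of the intersection.\<close>

lemma is_rec_imp_wf_typ: "is_rec r \<Longrightarrow> wf_typ r"
  by (induction r) auto

lemma sub_imp_wf_typ: "sub s t \<Longrightarrow> wf_typ s \<and> wf_typ t"
  by (induction rule: sub.induct) (auto simp: is_rec_imp_wf_typ)

lemma teq_imp_wf_typ: "teq s t \<Longrightarrow> wf_typ s \<and> wf_typ t"
  unfolding teq_def using sub_imp_wf_typ by blast

lemma teq_refl: "wf_typ s \<Longrightarrow> teq s s"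
  by (simp add: teq_def sub.refl)

lemma teq_sym: "teq s t \<Longrightarrow> teq t s"
  by (simp add: teq_def)

lemma teq_trans [trans]: "teq s t \<Longrightarrow> teq t u \<Longrightarrow> teq s u"
  unfolding teq_def using sub.trans by blast

lemma teq_Inter_cong:
  assumes "teq a a'" and "teq b b'"
  shows "teq (Inter a b) (Inter a' b')"
proof -
  have "wf_typ a" "wf_typ a'" "wf_typ b" "wf_typ b'"
    using assms teq_imp_wf_typ by blast+
  with assms show ?thesis
    unfolding teq_def by (meson sub.inter_glb sub.inter_l sub.inter_r sub.trans wf_typ.simps(4))
qed

lemma sub_Inter_left_commute:
  assumes "wf_typ a" "wf_typ b" "wf_typ c"
  shows "sub (Inter a (Inter b c)) (Inter b (Inter a c))"
proof -
  have abc: "wf_typ (Inter a (Inter b c))" and bc: "wf_typ (Inter b c)"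
    using assms by simp_all
  have "sub (Inter a (Inter b c)) (Inter b c)"
    using sub.inter_r[OF abc] .
  with sub.inter_l[OF bc] sub.inter_r[OF bc] sub.inter_l[OF abc] show ?thesis
    by (meson sub.inter_glb sub.trans)
qed

lemma teq_Inter_left_commute:
  "wf_typ a \<Longrightarrow> wf_typ b \<Longrightarrow> wf_typ c \<Longrightarrow> teq (Inter a (Inter b c)) (Inter b (Inter a c))"
  unfolding teq_def by (simp add: sub_Inter_left_commute)

lemma teq_Inter_REmpty: "wf_typ s \<Longrightarrow> teq (RField l s) (Inter (RField l s) REmpty)"
  unfolding teq_def
  by (simp add: sub.inter_glb sub.refl sub.field_empty sub.inter_l)

lemma teq_RPlus_REmpty: "is_rec r \<Longrightarrow> teq (RPlus r REmpty) r"
  unfolding teq_def by (simp add: sub.plus_empty_r1 sub.plus_empty_r2)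

lemma teq_RPlus_cong:
  "is_rec r \<Longrightarrow> is_rec a \<Longrightarrow> is_rec b \<Longrightarrow> teq a b \<Longrightarrow> teq (RPlus r a) (RPlus r b)"
  unfolding teq_def using sub.plus_cong_r1 sub.plus_cong_r2 by blast

lemma teq_RPlus_RField_same:
  "wf_typ s \<Longrightarrow> wf_typ t \<Longrightarrow> is_rec r \<Longrightarrow>
     teq (RPlus (RField l s) (Inter (RField l t) r)) (Inter (RField l t) r)"
  unfolding teq_def by (simp add: sub.plus_same1 sub.plus_same2)

lemma teq_RPlus_RField_diff:
  "l \<noteq> l' \<Longrightarrow> wf_typ s \<Longrightarrow> wf_typ t \<Longrightarrow> is_rec r \<Longrightarrow>
     teq (RPlus (RField l s) (Inter (RField l' t) r)) (Inter (RField l' t) (RPlus (RField l s) r))"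
  unfolding teq_def by (simp add: sub.plus_diff1 sub.plus_diff2)

abbreviation wf_fields :: "('l \<times> ('a, 'l) ity) list \<Rightarrow> bool" where
  "wf_fields xs \<equiv> \<forall>p\<in>set xs. wf_typ (snd p)"

lemma is_rec_rec_list: "wf_fields xs \<Longrightarrow> is_rec (rec_list xs)"
  by (induction xs rule: rec_list.induct) auto

lemma teq_rec_list_Cons:
  assumes "wf_fields ((l, t) # xs)"
  shows "teq (rec_list ((l, t) # xs)) (Inter (RField l t) (rec_list xs))"
proof (cases xs)
  case Nil
  then show ?thesis using assms teq_Inter_REmpty by simp
next
  case (Cons y ys)
  have "wf_typ (rec_list ((l, t) # xs))"
    using assms is_rec_rec_list is_rec_imp_wf_typ by blast
  with Cons show ?thesis by (cases y) (simp add: teq_refl)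
qed

lemma teq_RPlus_RField_rec_list_Cons:
  assumes "wf_typ s" and "wf_fields ((l, t) # xs)"
  shows "teq (RPlus (RField l0 s) (rec_list ((l, t) # xs)))
             (RPlus (RField l0 s) (Inter (RField l t) (rec_list xs)))"
  using assms is_rec_rec_list[of xs] is_rec_rec_list[of "(l, t) # xs"]
  by (intro teq_RPlus_cong teq_rec_list_Cons) simp_all

lemma teq_RPlus_RField_rec_list_mem:
  assumes "wf_typ s" and "wf_fields xs" and "l0 \<in> fst ` set xs"
  shows "teq (RPlus (RField l0 s) (rec_list xs)) (rec_list xs)"
  using assms(2,3)
proof (induction xs)
  case Nil
  then show ?case by simp
next
  case (Cons p xs)
  obtain l t where p: "p = (l, t)" by fastforce
  with Cons.prems have t: "wf_typ t" and xs: "wf_fields xs" by auto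
  from xs have r: "is_rec (rec_list xs)" by (rule is_rec_rec_list)
  have "teq (RPlus (RField l0 s) (rec_list (p # xs)))
            (RPlus (RField l0 s) (Inter (RField l t) (rec_list xs)))"
    using teq_RPlus_RField_rec_list_Cons[OF assms(1)] Cons.prems p by simp
  also have "teq \<dots> (Inter (RField l t) (rec_list xs))"
  proof (cases "l = l0")
    case True
    then show ?thesis using teq_RPlus_RField_same[OF assms(1) t r] by simp
  next
    case False
    with Cons.prems p have "l0 \<in> fst ` set xs" by auto
    with Cons.IH xs have "teq (RPlus (RField l0 s) (rec_list xs)) (rec_list xs)" by blast
    then have "teq (Inter (RField l t) (RPlus (RField l0 s) (rec_list xs)))
                   (Inter (RField l t) (rec_list xs))"
      using teq_Inter_cong teq_refl[of "RField l t"] t by simp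
    with False show ?thesis
      using teq_RPlus_RField_diff[of l0 l s t "rec_list xs"] assms(1) t r teq_trans by blast
  qed
  also have "teq \<dots> (rec_list (p # xs))"
    using teq_rec_list_Cons[of l t xs] Cons.prems p by (blast intro: teq_sym)
  finally show ?case .
qed

lemma teq_RPlus_RField_rec_list_not_mem:
  assumes "wf_typ s" and "wf_fields xs" and "l0 \<notin> fst ` set xs"
  shows "teq (RPlus (RField l0 s) (rec_list xs)) (Inter (RField l0 s) (rec_list xs))"
  using assms(2,3)
proof (induction xs)
  case Nil
  have "teq (RPlus (RField l0 s) REmpty) (RField l0 s)"
    using teq_RPlus_REmpty[of "RField l0 s"] assms(1) by simp
  also have "teq \<dots> (Inter (RField l0 s) REmpty)"
    using teq_Inter_REmpty assms(1) .
  finally show ?case by simp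
next
  case (Cons p xs)
  obtain l t where p: "p = (l, t)" by fastforce
  with Cons.prems have t: "wf_typ t" and xs: "wf_fields xs" and "l \<noteq> l0"
    and not_mem: "l0 \<notin> fst ` set xs" by auto
  have r: "is_rec (rec_list xs)" using xs by (rule is_rec_rec_list)
  have "teq (RPlus (RField l0 s) (rec_list (p # xs)))
            (RPlus (RField l0 s) (Inter (RField l t) (rec_list xs)))"
    using teq_RPlus_RField_rec_list_Cons[OF assms(1)] Cons.prems p by simp
  also have "teq \<dots> (Inter (RField l t) (RPlus (RField l0 s) (rec_list xs)))"
    using teq_RPlus_RField_diff[of l0 l s t "rec_list xs"] \<open>l \<noteq> l0\<close> assms(1) t r by simp
  also have "teq \<dots> (Inter (RField l t) (Inter (RField l0 s) (rec_list xs)))"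
    using Cons.IH[OF xs not_mem] teq_Inter_cong teq_refl[of "RField l t"] t by simp
  also have "teq \<dots> (Inter (RField l0 s) (Inter (RField l t) (rec_list xs)))"
    using assms(1) t is_rec_imp_wf_typ[OF r] by (simp add: teq_Inter_left_commute)
  also have "teq \<dots> (Inter (RField l0 s) (rec_list (p # xs)))"
  proof (rule teq_Inter_cong)
    show "teq (RField l0 s) (RField l0 s)" using assms(1) by (simp add: teq_refl)
    show "teq (Inter (RField l t) (rec_list xs)) (rec_list (p # xs))"
      using teq_rec_list_Cons[of l t xs] Cons.prems p by (blast intro: teq_sym)
  qed
  finally show ?case .
qed

theorem lemma3p6:
  fixes l :: "'i::linorder \<Rightarrow> 'l" and tau :: "'i \<Rightarrow> ('a, 'l) ity"
    and sigma :: "('a, 'l) ity" and j0 :: 'i and J :: "'i set"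
  assumes "finite J"
    and "inj_on l (insert j0 J)"
    and "wf_typ sigma"
    and "\<forall>j\<in>J. wf_typ (tau j)"
  shows "(j0 \<in> J \<longrightarrow> teq (RPlus (RField (l j0) sigma) (rec_idx l tau J)) (rec_idx l tau J))
       \<and> (j0 \<notin> J \<longrightarrow> teq (RPlus (RField (l j0) sigma) (rec_idx l tau J))
                            (Inter (RField (l j0) sigma) (rec_idx l tau J)))"
proof -
  let ?xs = "map (\<lambda>j. (l j, tau j)) (sorted_list_of_set J)"
  have fields: "wf_fields ?xs" using assms(1,4) by auto
  have labels: "fst ` set ?xs = l ` J" using assms(1) by (auto simp: image_image)
  have "l j0 \<in> l ` J \<longleftrightarrow> j0 \<in> J" using assms(2) by (auto simp: inj_on_def)
  with labels have "l j0 \<in> fst ` set ?xs \<longleftrightarrow> j0 \<in> J" by simp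
  then show ?thesis
    unfolding rec_idx_def
    using teq_RPlus_RField_rec_list_mem[OF assms(3) fields]
      teq_RPlus_RField_rec_list_not_mem[OF assms(3) fields]
    by blast
qed

end
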